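(* Let $\Pi$ be constructed as below in a metric space of doubling dimension at most $\kappa$. For every point $p\in V$, every integer $r$, and every integer $\alpha\ge 0$, the set $$\Pi(p,r)=\{\langle j,r\rangle\in\Pi : d(p,j)<2^{\alpha}5^{r+1}\}$$ has at most $2^{(\alpha+1)\kappa}$ elements.
   Context: $(V,d)$ is a metric space of diameter $W$ whose doubling dimension is at most $\kappa$: every ball $B(x,\rho)=\{y\in V:d(x,y)\le\rho\}$ can be covered by $2^\kappa$ balls of radius $\rho/2$. $F\subseteq V$ is a finite set of facilities with opening costs $f_j>0$, $f_{\min}=\min_j f_j$. Let $\rho_{\min}=\lfloor\log_5 f_{\min}\rfloor$, $\rho_{\max}=\lceil\log_5 W\rceil$. For each integer $r\in[\rho_{\min},\rho_{\max}]$, let $J'_r=\{j\in F:f_j\le 5^r\}$ and let $J_r$ be a maximal subset of $J'_r$ such that any two facilities of $J_r$ are at distance greater than $5^{r+1}$. $\Pi=\{\langle j,r\rangle:\rho_{\min}\le r\le\rho_{\max},\ j\in J_r\}$. *)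

theory Defs
  imports "HOL-Analysis.Analysis"
begin

definition cball_in :: "'a set \<Rightarrow> ('a \<Rightarrow> 'a \<Rightarrow> real) \<Rightarrow> 'a \<Rightarrow> real \<Rightarrow> 'a set" where
  "cball_in V d x \<rho> = {y \<in> V. d x y \<le> \<rho>}"

definition doubling_dim_le :: "'a set \<Rightarrow> ('a \<Rightarrow> 'a \<Rightarrow> real) \<Rightarrow> real \<Rightarrow> bool" where
  "doubling_dim_le V d \<kappa> \<longleftrightarrow>
     (\<forall>x\<in>V. \<forall>\<rho>::real. \<exists>C. C \<subseteq> V \<and> finite C \<and> real (card C) \<le> 2 powr \<kappa> \<and>
        cball_in V d x \<rho> \<subseteq> (\<Union>c\<in>C. cball_in V d c (\<rho> / 2)))"

definition diameter_of :: "'a set \<Rightarrow> ('a \<Rightarrow> 'a \<Rightarrow> real) \<Rightarrow> real" where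
  "diameter_of V d = Sup {d x y | x y. x \<in> V \<and> y \<in> V}"

definition rho_min :: "'a set \<Rightarrow> ('a \<Rightarrow> real) \<Rightarrow> int" where
  "rho_min F f = \<lfloor>log 5 (Min (f ` F))\<rfloor>"

definition rho_max :: "'a set \<Rightarrow> ('a \<Rightarrow> 'a \<Rightarrow> real) \<Rightarrow> int" where
  "rho_max V d = \<lceil>log 5 (diameter_of V d)\<rceil>"

definition Jprime :: "'a set \<Rightarrow> ('a \<Rightarrow> real) \<Rightarrow> int \<Rightarrow> 'a set" where
  "Jprime F f r = {j \<in> F. f j \<le> (5::real) powi r}"

definition separated :: "('a \<Rightarrow> 'a \<Rightarrow> real) \<Rightarrow> real \<Rightarrow> 'a set \<Rightarrow> bool" where
  "separated d \<delta> S \<longleftrightarrow> (\<forall>x\<in>S. \<forall>y\<in>S. x \<noteq> y \<longrightarrow> d x y > \<delta>)"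

definition maximal_sep :: "('a \<Rightarrow> 'a \<Rightarrow> real) \<Rightarrow> 'a set \<Rightarrow> int \<Rightarrow> 'a set \<Rightarrow> bool" where
  "maximal_sep d J' r J \<longleftrightarrow> J \<subseteq> J' \<and> separated d ((5::real) powi (r + 1)) J \<and>
     (\<forall>S. J \<subseteq> S \<and> S \<subseteq> J' \<and> separated d ((5::real) powi (r + 1)) S \<longrightarrow> S = J)"

definition Pi_set :: "'a set \<Rightarrow> ('a \<Rightarrow> 'a \<Rightarrow> real) \<Rightarrow> 'a set \<Rightarrow> ('a \<Rightarrow> real) \<Rightarrow> (int \<Rightarrow> 'a set)
    \<Rightarrow> ('a \<times> int) set" where
  "Pi_set V d F f J = {(j, r). rho_min F f \<le> r \<and> r \<le> rho_max V d \<and> j \<in> J r}"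

end

theory Submission
  imports Defs
begin

text \<open>Iterating the doubling property \<open>k\<close> times covers a ball of radius \<open>\<rho>\<close> by
  \<open>2^(k\<kappa>)\<close> balls of radius \<open>\<rho>/2^k\<close>. Any two points of \<open>\<Pi>(p,r)\<close> are more than \<open>5^(r+1)\<close>
  apart, and they all lie in the ball of radius \<open>2^\<alpha> 5^(r+1)\<close> around \<open>p\<close>; covering that ball
  with \<open>\<alpha>+1\<close> halvings gives balls of diameter at most \<open>5^(r+1)\<close>, each containing at most one
  point of \<open>\<Pi>(p,r)\<close>.\<close>

lemma doubling_dim_le_iterated_cover:
  assumes dd: "doubling_dim_le V d \<kappa>" and x: "x \<in> V"
  shows "\<exists>C. C \<subseteq> V \<and> finite C \<and> real (card C) \<le> 2 powr (real k * \<kappa>) \<and>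
           cball_in V d x \<rho> \<subseteq> (\<Union>c\<in>C. cball_in V d c (\<rho> / 2^k))"
proof (induction k)
  case 0
  show ?case by (rule exI[of _ "{x}"]) (use x in auto)
next
  case (Suc k)
  then obtain C where C: "C \<subseteq> V" "finite C" "real (card C) \<le> 2 powr (real k * \<kappa>)"
    "cball_in V d x \<rho> \<subseteq> (\<Union>c\<in>C. cball_in V d c (\<rho> / 2^k))" by blast
  have "\<forall>c\<in>C. \<exists>D. D \<subseteq> V \<and> finite D \<and> real (card D) \<le> 2 powr \<kappa> \<and>
        cball_in V d c (\<rho> / 2^k) \<subseteq> (\<Union>e\<in>D. cball_in V d e (\<rho> / 2^k / 2))"
    using dd C(1) unfolding doubling_dim_le_def by blast
  then obtain D where D: "\<And>c. c \<in> C \<Longrightarrow> D c \<subseteq> V \<and> finite (D c) \<and> real (card (D c)) \<le> 2 powr \<kappa> \<and>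
        cball_in V d c (\<rho> / 2^k) \<subseteq> (\<Union>e\<in>D c. cball_in V d e (\<rho> / 2^k / 2))"
    by metis
  let ?C = "\<Union>c\<in>C. D c"
  have "real (card ?C) \<le> (\<Sum>c\<in>C. real (card (D c)))"
    using card_UN_le[OF C(2), of D] by (simp only: of_nat_sum[symmetric] of_nat_le_iff)
  also have "\<dots> \<le> (\<Sum>c\<in>C. 2 powr \<kappa>)" by (rule sum_mono) (use D in auto)
  also have "\<dots> = real (card C) * 2 powr \<kappa>" by simp
  also have "\<dots> \<le> 2 powr (real k * \<kappa>) * 2 powr \<kappa>"
    by (rule mult_right_mono) (use C(3) in auto)
  also have "\<dots> = 2 powr (real (Suc k) * \<kappa>)"
    by (simp add: powr_add[symmetric] algebra_simps)
  finally have card: "real (card ?C) \<le> 2 powr (real (Suc k) * \<kappa>)" .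
  have cover: "cball_in V d x \<rho> \<subseteq> (\<Union>e\<in>?C. cball_in V d e (\<rho> / 2^Suc k))"
  proof
    fix y assume "y \<in> cball_in V d x \<rho>"
    then obtain c where c: "c \<in> C" "y \<in> cball_in V d c (\<rho> / 2^k)" using C(4) by blast
    then obtain e where "e \<in> D c" "y \<in> cball_in V d e (\<rho> / 2^k / 2)" using D[OF c(1)] by blast
    then show "y \<in> (\<Union>e\<in>?C. cball_in V d e (\<rho> / 2^Suc k))" using c(1) by (auto simp: mult.commute)
  qed
  have "?C \<subseteq> V" "finite ?C" using C(2) D by blast+
  with card cover show ?case by (intro exI[of _ ?C]) simp
qed

lemma card_separated_subset_cball_le:
  assumes "Metric_space V d" and dd: "doubling_dim_le V d \<kappa>" and x: "x \<in> V"
    and S_ball: "S \<subseteq> cball_in V d x \<rho>" and sep: "separated d \<delta> S"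
    and small: "2 * (\<rho> / 2^k) \<le> \<delta>"
  shows "real (card S) \<le> 2 powr (real k * \<kappa>)"
proof -
  interpret M: Metric_space V d by fact
  obtain C where C: "C \<subseteq> V" "finite C" "real (card C) \<le> 2 powr (real k * \<kappa>)"
    and cover: "cball_in V d x \<rho> \<subseteq> (\<Union>c\<in>C. cball_in V d c (\<rho> / 2^k))"
    using doubling_dim_le_iterated_cover[OF dd x, where k=k and \<rho>=\<rho>] by (elim exE conjE) blast
  obtain g where g: "\<And>s. s \<in> S \<Longrightarrow> g s \<in> C \<and> s \<in> cball_in V d (g s) (\<rho> / 2^k)"
  proof -
    have "\<forall>s\<in>S. \<exists>c\<in>C. s \<in> cball_in V d c (\<rho> / 2^k)" using S_ball cover by blast
    then show ?thesis using that by metis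
  qed
  have "inj_on g S"
  proof (rule inj_onI)
    fix s t assume st: "s \<in> S" "t \<in> S" "g s = g t"
    have V: "s \<in> V" "t \<in> V" "g s \<in> V" using st S_ball C(1) g[OF st(1)] by (auto simp: cball_in_def)
    have "d s t \<le> d s (g s) + d (g s) t" using M.triangle V by blast
    also have "\<dots> \<le> 2 * (\<rho> / 2^k)"
      using g[OF st(1)] g[OF st(2)] st(3) by (auto simp: cball_in_def M.commute)
    finally have "d s t \<le> \<delta>" using small by linarith
    then show "s = t" using sep st(1,2) unfolding separated_def by force
  qed
  then have "card S \<le> card C" by (rule card_inj_on_le) (use g C(2) in auto)
  with C(3) show ?thesis by linarith
qed

theorem lemma3:
  fixes V :: "'a set" and d :: "'a \<Rightarrow> 'a \<Rightarrow> real" and \<kappa> :: real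
    and F :: "'a set" and f :: "'a \<Rightarrow> real" and J :: "int \<Rightarrow> 'a set"
    and p :: 'a and r :: int and \<alpha> :: nat
  assumes "Metric_space V d"
    and "V \<noteq> {}" and "\<exists>B. \<forall>x\<in>V. \<forall>y\<in>V. d x y \<le> B"
    and "doubling_dim_le V d \<kappa>"
    and "finite F" and "F \<noteq> {}" and "F \<subseteq> V" and "\<forall>j\<in>F. f j > 0"
    and "\<forall>r'. rho_min F f \<le> r' \<and> r' \<le> rho_max V d \<longrightarrow> maximal_sep d (Jprime F f r') r' (J r')"
    and "p \<in> V"
  shows "real (card {(j, r'). (j, r') \<in> Pi_set V d F f J \<and> r' = r \<and>
                     d p j < 2 ^ \<alpha> * (5::real) powi (r + 1)})
         \<le> 2 powr ((real \<alpha> + 1) * \<kappa>)"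
proof (cases "rho_min F f \<le> r \<and> r \<le> rho_max V d")
  case False
  then have "{(j, r'). (j, r') \<in> Pi_set V d F f J \<and> r' = r \<and>
                     d p j < 2 ^ \<alpha> * (5::real) powi (r + 1)} = {}"
    by (auto simp: Pi_set_def)
  then show ?thesis by (simp only: card.empty) simp
next
  case True
  define R where "R = 2 ^ \<alpha> * (5::real) powi (r + 1)"
  define A where "A = {j \<in> J r. d p j < R}"
  have ms: "maximal_sep d (Jprime F f r) r (J r)" using assms(9) True by blast
  then have sep: "separated d ((5::real) powi (r + 1)) A"
    by (auto simp: maximal_sep_def separated_def A_def)
  have "A \<subseteq> cball_in V d p R"
    using ms assms(7) by (auto simp: maximal_sep_def Jprime_def A_def cball_in_def)
  then have "real (card A) \<le> 2 powr (real (Suc \<alpha>) * \<kappa>)"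
    by (rule card_separated_subset_cball_le[OF assms(1,4,10) _ sep]) (simp add: R_def)
  moreover have "{(j, r'). (j, r') \<in> Pi_set V d F f J \<and> r' = r \<and>
                     d p j < 2 ^ \<alpha> * (5::real) powi (r + 1)} = (\<lambda>j. (j, r)) ` A"
    using True by (auto simp: Pi_set_def A_def R_def)
  moreover have "card ((\<lambda>j. (j, r)) ` A) = card A"
    by (rule card_image) (auto simp: inj_on_def)
  ultimately show ?thesis by (simp add: algebra_simps)
qed

end
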